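(* Let $a(x,\xi)$, $x,\xi\in\mathbb{R}^d$, be a smooth symbol of order zero and type $(1,0)$ which is compactly supported in $x$. Then for every $M>0$ there exists $C_M>0$ such that for all $\epsilon>0$, the $\epsilon$-separation rank $r_\epsilon$ of $a(x,\xi)$ with respect to the variables $x$ and $\xi$ obeys $r_\epsilon\le C_M\,\epsilon^{-1/M}$.
   Context: A smooth function $a(x,\xi)$ is a symbol of order zero and type $(1,0)$ if for every pair of multi-indices $(\alpha,\beta)$ there is a constant $C_{\alpha\beta}>0$ with $|\partial_\xi^\alpha\partial_x^\beta a(x,\xi)|\le C_{\alpha\beta}(1+|\xi|^2)^{-|\alpha|/2}$ for all $x,\xi$. For a function $f(x,\xi)$ and $\epsilon>0$, the $\epsilon$-separation rank is the smallest integer $r_\epsilon$ for which there exist functions $c_n(x)$, $d_n(\xi)$ ($0\le n\le r_\epsilon-1$) with $|f(x,\xi)-\sum_{n=0}^{r_\epsilon-1}c_n(x)d_n(\xi)|\le\epsilon$ for all $x,\xi$. *)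

theory Defs
  imports "HOL-Analysis.Analysis"
begin

definition dirderiv :: "'a::real_normed_vector \<Rightarrow> ('a \<Rightarrow> complex) \<Rightarrow> 'a \<Rightarrow> complex" where
  "dirderiv v g z = vector_derivative (\<lambda>t::real. g (z + t *\<^sub>R v)) (at 0)"

fun iter_dd :: "'a::real_normed_vector list \<Rightarrow> ('a \<Rightarrow> complex) \<Rightarrow> 'a \<Rightarrow> complex" where
  "iter_dd [] g = g"
| "iter_dd (v # vs) g = dirderiv v (iter_dd vs g)"

definition smooth_fun :: "('a::real_normed_vector \<Rightarrow> complex) \<Rightarrow> bool" where
  "smooth_fun g \<longleftrightarrow> (\<forall>vs. iter_dd vs g differentiable_on UNIV)"

text \<open>Mixed partial derivative of a(x,xi): first the x-derivatives in the coordinate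
  directions listed in bs, then the xi-derivatives in the directions listed in as.
  A multi-index is represented by a list of coordinate indices, its order |alpha| being
  the length of the list.\<close>
definition mixed_partial ::
  "'d list \<Rightarrow> 'd list \<Rightarrow> (real^'d::finite \<Rightarrow> real^'d \<Rightarrow> complex) \<Rightarrow> real^'d \<Rightarrow> real^'d \<Rightarrow> complex" where
  "mixed_partial as bs a x \<xi> =
     iter_dd (map (\<lambda>i. (0, axis i 1)) as @ map (\<lambda>i. (axis i 1, 0)) bs)
             (\<lambda>(y, \<eta>). a y \<eta>) (x, \<xi>)"

definition symbol_S0_10 :: "(real^'d::finite \<Rightarrow> real^'d \<Rightarrow> complex) \<Rightarrow> bool" where
  "symbol_S0_10 a \<longleftrightarrow> smooth_fun (\<lambda>(x, \<xi>). a x \<xi>) \<and>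
     (\<forall>as bs. \<exists>C>0. \<forall>x \<xi>. cmod (mixed_partial as bs a x \<xi>)
         \<le> C * (1 + norm \<xi> ^ 2) powr (- real (length as) / 2))"

definition compact_supp_x :: "('a::topological_space \<Rightarrow> 'b \<Rightarrow> complex) \<Rightarrow> bool" where
  "compact_supp_x a \<longleftrightarrow> (\<exists>K. compact K \<and> (\<forall>x \<xi>. x \<notin> K \<longrightarrow> a x \<xi> = 0))"

definition sep_approx :: "('a \<Rightarrow> 'b \<Rightarrow> complex) \<Rightarrow> real \<Rightarrow> nat \<Rightarrow> bool" where
  "sep_approx f \<epsilon> r \<longleftrightarrow> (\<exists>c d. \<forall>x \<xi>. cmod (f x \<xi> - (\<Sum>n<r. c n x * d n \<xi>)) \<le> \<epsilon>)"

definition sep_rank :: "('a \<Rightarrow> 'b \<Rightarrow> complex) \<Rightarrow> real \<Rightarrow> nat" where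
  "sep_rank f \<epsilon> = (LEAST r. sep_approx f \<epsilon> r)"

end

theory Submission
  imports Defs
begin

text \<open>Cover the compact x-support by a grid of cubes of side h and replace a, on each cube,
  by its Taylor polynomial of order n in x around the corner of the cube. Each term of such a
  polynomial is a product of a function of x and a function of \<xi>, so a is approximated with
  error O(h^(n+1)) by a separated sum with O(h^(-d)) terms, the implied constants depending
  only on the bounds for the x-derivatives of a. Choosing h^(n+1) \<sim> \<epsilon> gives
  r_\<epsilon> = O(\<epsilon>^(-d/(n+1))), and n + 1 \<ge> d M yields the claim.\<close>

lemma has_vector_derivative_along_line:
  fixes F :: "'a::real_normed_vector \<Rightarrow> 'b::real_normed_vector"
  assumes "(F has_derivative F') (at (z + t *\<^sub>R v))"
  shows "((\<lambda>s. F (z + s *\<^sub>R v)) has_vector_derivative F' v) (at t)"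
proof -
  have "((\<lambda>s. z + s *\<^sub>R v) has_derivative (\<lambda>s. s *\<^sub>R v)) (at t)"
    by (auto intro!: derivative_eq_intros)
  from has_derivative_compose[OF this assms]
  have "((\<lambda>s. F (z + s *\<^sub>R v)) has_derivative (\<lambda>s. F' (s *\<^sub>R v))) (at t)" .
  then show ?thesis
    using linear_scale[OF has_derivative_linear[OF assms]] by (simp add: has_vector_derivative_def)
qed

lemma dirderiv_eq_derivative:
  assumes "(F has_derivative F') (at z)"
  shows "dirderiv v F z = F' v"
  unfolding dirderiv_def
  by (rule vector_derivative_at, rule has_vector_derivative_along_line) (use assms in simp)

lemma dirderiv_sum:
  fixes f :: "'s \<Rightarrow> 'a::real_normed_vector \<Rightarrow> complex"
  assumes "finite S" "\<And>s. s \<in> S \<Longrightarrow> f s differentiable (at z)"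
  shows "dirderiv v (\<lambda>y. \<Sum>s\<in>S. k s * f s y) z = (\<Sum>s\<in>S. k s * dirderiv v (f s) z)"
proof -
  obtain f' where f': "\<And>s. s \<in> S \<Longrightarrow> (f s has_derivative f' s) (at z)"
    using assms(2) unfolding differentiable_def by metis
  have "((\<lambda>y. \<Sum>s\<in>S. k s * f s y) has_derivative (\<lambda>h. \<Sum>s\<in>S. k s * f' s h)) (at z)"
    by (intro has_derivative_sum has_derivative_mult_right f')
  then have "dirderiv v (\<lambda>y. \<Sum>s\<in>S. k s * f s y) z = (\<Sum>s\<in>S. k s * f' s v)"
    by (rule dirderiv_eq_derivative)
  also have "\<dots> = (\<Sum>s\<in>S. k s * dirderiv v (f s) z)"
    by (intro sum.cong refl) (simp add: dirderiv_eq_derivative[OF f'])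
  finally show ?thesis .
qed

lemma dirderiv_sum_directions:
  fixes F :: "'a::real_normed_vector \<Rightarrow> complex"
  assumes "F differentiable (at z)" "finite I"
  shows "dirderiv (\<Sum>i\<in>I. c i *\<^sub>R b i) F z = (\<Sum>i\<in>I. of_real (c i) * dirderiv (b i) F z)"
proof -
  obtain F' where F': "(F has_derivative F') (at z)"
    using assms(1) unfolding differentiable_def by metis
  have "linear F'" using F' has_derivative_linear by blast
  then show ?thesis
    by (simp add: dirderiv_eq_derivative[OF F'] linear_sum linear_scale scaleR_conv_of_real)
qed

lemma smooth_fun_differentiable_iter_dd: "smooth_fun A \<Longrightarrow> iter_dd vs A differentiable (at z)"
  unfolding smooth_fun_def differentiable_on_def by auto

lemma has_vector_derivative_iter_dd_along_line:
  assumes "smooth_fun A"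
  shows "((\<lambda>s. iter_dd vs A (z + s *\<^sub>R w)) has_vector_derivative iter_dd (w # vs) A (z + t *\<^sub>R w))
    (at t)"
proof -
  obtain F' where F': "(iter_dd vs A has_derivative F') (at (z + t *\<^sub>R w))"
    using smooth_fun_differentiable_iter_dd[OF assms] unfolding differentiable_def by metis
  show ?thesis
    using has_vector_derivative_along_line[OF F'] dirderiv_eq_derivative[OF F'] by simp
qed

definition multi_indices :: "nat \<Rightarrow> 'i list set" where
  "multi_indices k = {is. length is = k}"

lemma finite_multi_indices: "finite (multi_indices k :: 'i::finite list set)"
  using finite_lists_length_eq[of "UNIV :: 'i set" k] by (simp add: multi_indices_def)

lemma multi_indices_Suc: "multi_indices (Suc k) = (\<lambda>(is, i). i # is) ` (multi_indices k \<times> UNIV)"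
  using lists_length_Suc_eq[of UNIV k] by (simp add: multi_indices_def)

abbreviation x_axes :: "'d list \<Rightarrow> ((real^'d::finite) \<times> 'b::real_vector) list" where
  "x_axes is \<equiv> map (\<lambda>i. (axis i 1, 0)) is"

lemma pair_zero_axis_expansion:
  "((u::real^'d::finite), 0::'b::real_vector) = (\<Sum>i\<in>UNIV. (u$i) *\<^sub>R (axis i 1, 0::'b))"
proof -
  have "(\<Sum>i\<in>UNIV. (u$i) *\<^sub>R (axis i 1 :: real^'d)) = u"
    using basis_expansion[of u] by (simp add: scalar_mult_eq_scaleR)
  then show ?thesis by (simp add: prod_eq_iff fst_sum snd_sum)
qed

lemma iter_dd_replicate_expansion:
  fixes A :: "(real^'d::finite) \<times> 'b::real_normed_vector \<Rightarrow> complex"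
  assumes "smooth_fun A"
  shows "iter_dd (replicate k (u, 0)) A z =
    (\<Sum>is\<in>multi_indices k. of_real (\<Prod>i\<leftarrow>is. u$i) * iter_dd (x_axes is) A z)"
proof (induction k arbitrary: z)
  case 0
  then show ?case by (simp add: multi_indices_def)
next
  case (Suc k)
  have "iter_dd (replicate (Suc k) (u, 0)) A z = dirderiv (u, 0) (iter_dd (replicate k (u, 0)) A) z"
    by simp
  also have "\<dots> = (\<Sum>is\<in>multi_indices k.
      of_real (\<Prod>i\<leftarrow>is. u$i) * dirderiv (u, 0) (iter_dd (x_axes is) A) z)"
    unfolding Suc.IH[abs_def]
    by (intro dirderiv_sum finite_multi_indices smooth_fun_differentiable_iter_dd assms)
  also have "\<dots> = (\<Sum>is\<in>multi_indices k. of_real (\<Prod>i\<leftarrow>is. u$i) *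
      (\<Sum>i\<in>UNIV. of_real (u$i) * iter_dd (x_axes (i # is)) A z))"
    by (subst pair_zero_axis_expansion,
        subst dirderiv_sum_directions[OF smooth_fun_differentiable_iter_dd[OF assms]]) simp_all
  also have "\<dots> = (\<Sum>(is, i)\<in>multi_indices k \<times> UNIV.
      of_real (\<Prod>j\<leftarrow>i # is. u$j) * iter_dd (x_axes (i # is)) A z)"
    by (simp add: sum.cartesian_product' sum_distrib_left mult.assoc mult.left_commute)
  also have "\<dots> = (\<Sum>is\<in>multi_indices (Suc k). of_real (\<Prod>i\<leftarrow>is. u$i) * iter_dd (x_axes is) A z)"
    unfolding multi_indices_Suc by (subst sum.reindex) (auto simp: inj_on_def case_prod_beta)
  finally show ?case .
qed

lemma abs_prod_list_le_power:
  fixes f :: "'i \<Rightarrow> real"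
  assumes "\<And>i. \<bar>f i\<bar> \<le> h"
  shows "\<bar>\<Prod>i\<leftarrow>is. f i\<bar> \<le> h ^ length is"
proof (induction "is")
  case Nil
  then show ?case by simp
next
  case (Cons i "is")
  then show ?case
    using assms[of i] by (simp add: abs_mult mult_mono)
qed

lemma Taylor_remainder_bound:
  fixes f :: "nat \<Rightarrow> real \<Rightarrow> 'a::banach"
  assumes "a \<le> b"
    and deriv: "\<And>m t. m \<le> n \<Longrightarrow> t \<in> {a..b} \<Longrightarrow>
      (f m has_vector_derivative f (Suc m) t) (at t within {a..b})"
    and bound: "\<And>t. t \<in> {a..b} \<Longrightarrow> norm (f (Suc n) t) \<le> B"
  shows "norm (f 0 b - (\<Sum>m\<le>n. ((b - a) ^ m / fact m) *\<^sub>R f m a)) \<le> B * (b - a) ^ Suc n / fact n"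
proof -
  have integral: "((\<lambda>t. ((b - t) ^ n / fact n) *\<^sub>R f (Suc n) t) has_integral
      f 0 b - (\<Sum>m\<le>n. ((b - a) ^ m / fact m) *\<^sub>R f m a)) {a..b}"
    using Taylor_has_integral[of "Suc n" f "f 0" a b] deriv \<open>a \<le> b\<close>
    by (simp add: lessThan_Suc_atMost)
  have integrand_bound: "norm (((b - t) ^ n / fact n) *\<^sub>R f (Suc n) t) \<le> (b - a) ^ n / fact n * B"
    if "t \<in> {a..b}" for t
  proof -
    have "norm (((b - t) ^ n / fact n) *\<^sub>R f (Suc n) t) = (b - t) ^ n / fact n * norm (f (Suc n) t)"
      using that by simp
    also have "\<dots> \<le> (b - a) ^ n / fact n * B"
      using that bound[OF that] by (intro mult_mono divide_right_mono power_mono) auto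
    finally show ?thesis .
  qed
  have "0 \<le> B"
    using order_trans[OF norm_ge_zero bound[of a]] \<open>a \<le> b\<close> by simp
  with has_integral_bound_real[OF _ finite.emptyI integral, of "(b - a) ^ n / fact n * B"]
  have "norm (f 0 b - (\<Sum>m\<le>n. ((b - a) ^ m / fact m) *\<^sub>R f m a))
      \<le> (b - a) ^ n / fact n * B * (b - a)"
    using integrand_bound \<open>a \<le> b\<close> by simp
  then show ?thesis
    using \<open>a \<le> b\<close> by (simp add: field_simps)
qed

text \<open>The Taylor polynomial of order n of A(-, \<xi>) around q, evaluated at x. Summing over lists
  rather than multi-indices \<alpha> counts each monomial k!/\<alpha>! times, hence the factor 1/k!.\<close>

definition x_Taylor_poly ::
  "nat \<Rightarrow> ((real^'d::finite) \<times> 'b::real_normed_vector \<Rightarrow> complex) \<Rightarrow> real^'d \<Rightarrow> real^'d \<Rightarrow> 'b \<Rightarrow> complex"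
where
  "x_Taylor_poly n A q x \<xi> = (\<Sum>k\<le>n. \<Sum>is\<in>multi_indices k.
     of_real (\<Prod>i\<leftarrow>is. (x - q)$i) * iter_dd (x_axes is) A (q, \<xi>) / fact k)"

lemma x_Taylor_poly_error:
  fixes A :: "(real^'d::finite) \<times> 'b::real_normed_vector \<Rightarrow> complex"
  assumes smooth: "smooth_fun A"
    and deriv_bound: "\<And>is p. cmod (iter_dd (x_axes is) A p) \<le> Cf is"
    and close: "\<And>i. \<bar>(x - q)$i\<bar> \<le> h"
  shows "cmod (A (x, \<xi>) - x_Taylor_poly n A q x \<xi>)
    \<le> h ^ Suc n * (\<Sum>is\<in>multi_indices (Suc n). Cf is)" (is "_ \<le> ?err")
proof -
  define w where "w = (x - q, 0::'b)"
  define G where "G k t = iter_dd (replicate k w) A ((q, \<xi>) + t *\<^sub>R w)" for k t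
  have "0 \<le> h"
    using close[of undefined] by linarith
  have Cf_nonneg: "0 \<le> Cf is" for "is"
    by (rule order_trans[OF norm_ge_zero deriv_bound])
  have "0 \<le> ?err"
    by (intro mult_nonneg_nonneg zero_le_power sum_nonneg Cf_nonneg \<open>0 \<le> h\<close>)
  have G_deriv: "(G k has_vector_derivative G (Suc k) t) (at t within {0..1})" for k t
    unfolding G_def[abs_def] replicate_Suc
    by (rule has_vector_derivative_at_within, rule has_vector_derivative_iter_dd_along_line[OF smooth])
  have G_bound: "cmod (G (Suc n) t) \<le> ?err" for t
  proof -
    have "cmod (G (Suc n) t) \<le> (\<Sum>is\<in>multi_indices (Suc n).
        cmod (of_real (\<Prod>i\<leftarrow>is. (x - q)$i) * iter_dd (x_axes is) A ((q, \<xi>) + t *\<^sub>R w)))"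
      unfolding G_def w_def iter_dd_replicate_expansion[OF smooth] by (rule norm_sum)
    also have "\<dots> \<le> (\<Sum>is\<in>multi_indices (Suc n). h ^ Suc n * Cf is)"
    proof (rule sum_mono)
      fix "is" :: "'d list"
      assume "is \<in> multi_indices (Suc n)"
      then have "length is = Suc n"
        by (simp add: multi_indices_def)
      moreover have "\<bar>\<Prod>i\<leftarrow>is. (x - q)$i\<bar> \<le> h ^ length is"
        by (rule abs_prod_list_le_power) (rule close)
      ultimately have prod_le: "\<bar>\<Prod>i\<leftarrow>is. (x - q)$i\<bar> \<le> h ^ Suc n"
        by (simp only:)
      show "cmod (of_real (\<Prod>i\<leftarrow>is. (x - q)$i) * iter_dd (x_axes is) A ((q, \<xi>) + t *\<^sub>R w))
          \<le> h ^ Suc n * Cf is"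
        unfolding norm_mult norm_of_real
        by (rule mult_mono[OF prod_le deriv_bound]) (simp_all add: \<open>0 \<le> h\<close>)
    qed
    finally show ?thesis
      by (simp add: sum_distrib_left)
  qed
  have "cmod (G 0 1 - (\<Sum>k\<le>n. ((1 - 0) ^ k / fact k) *\<^sub>R G k 0)) \<le> ?err * (1 - 0) ^ Suc n / fact n"
    by (rule Taylor_remainder_bound[OF _ G_deriv G_bound]) simp
  also have "\<dots> \<le> ?err"
    using \<open>0 \<le> ?err\<close> by (simp add: divide_le_eq fact_ge_1 mult_le_cancel_left1)
  also have "G 0 1 = A (x, \<xi>)"
    by (simp add: G_def w_def)
  also have "((1 - 0) ^ k / fact k) *\<^sub>R G k 0 = (\<Sum>is\<in>multi_indices k.
      of_real (\<Prod>i\<leftarrow>is. (x - q)$i) * iter_dd (x_axes is) A (q, \<xi>) / fact k)" for k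
    by (simp add: G_def w_def iter_dd_replicate_expansion[OF smooth] scaleR_conv_of_real
        sum_divide_distrib[symmetric] del: vector_minus_component)
  then have "(\<Sum>k\<le>n. ((1 - 0) ^ k / fact k) *\<^sub>R G k 0) = x_Taylor_poly n A q x \<xi>"
    by (simp add: x_Taylor_poly_def)
  finally show ?thesis .
qed

lemma sep_approx_finite_sum:
  assumes "finite T" "\<And>x \<xi>. cmod (f x \<xi> - (\<Sum>t\<in>T. c t x * d t \<xi>)) \<le> \<epsilon>"
  shows "sep_approx f \<epsilon> (card T)"
proof -
  obtain g where g: "bij_betw g {..<card T} T"
    using ex_bij_betw_nat_finite[OF assms(1)] by (auto simp: atLeast0LessThan)
  have "(\<Sum>n<card T. c (g n) x * d (g n) \<xi>) = (\<Sum>t\<in>T. c t x * d t \<xi>)" for x \<xi>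
    using sum.reindex_bij_betw[OF g] .
  then show ?thesis
    unfolding sep_approx_def using assms(2)
    by (intro exI[of _ "\<lambda>n. c (g n)"] exI[of _ "\<lambda>n. d (g n)"]) simp
qed

lemma sep_approx_mono: "sep_approx f \<epsilon> r \<Longrightarrow> \<epsilon> \<le> \<epsilon>' \<Longrightarrow> sep_approx f \<epsilon>' r"
  unfolding sep_approx_def by (blast intro: order_trans)

lemma sep_rank_le: "sep_approx f \<epsilon> r \<Longrightarrow> sep_rank f \<epsilon> \<le> r"
  unfolding sep_rank_def by (rule Least_le)

text \<open>Multiply the x-factors by the indicator function of the cell.\<close>

lemma sep_approx_piecewise:
  assumes "finite Q" "finite I" "0 \<le> \<epsilon>"
    and cell: "\<And>x. x \<in> K \<Longrightarrow> cell x \<in> Q"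
    and support: "\<And>x \<xi>. x \<notin> K \<Longrightarrow> f x \<xi> = 0"
    and approx: "\<And>x \<xi>. x \<in> K \<Longrightarrow> cmod (f x \<xi> - (\<Sum>i\<in>I. c (cell x) i x * d (cell x) i \<xi>)) \<le> \<epsilon>"
  shows "sep_approx f \<epsilon> (card Q * card I)"
proof -
  define c' where "c' = (\<lambda>(q, i) x. if x \<in> K \<and> cell x = q then c q i x else 0)"
  have "(\<Sum>(q, i)\<in>Q \<times> I. c' (q, i) x * d q i \<xi>) =
      (if x \<in> K then \<Sum>i\<in>I. c (cell x) i x * d (cell x) i \<xi> else 0)" for x \<xi>
  proof -
    have "(\<Sum>(q, i)\<in>Q \<times> I. c' (q, i) x * d q i \<xi>) =
        (\<Sum>q\<in>Q. if x \<in> K \<and> cell x = q then \<Sum>i\<in>I. c q i x * d q i \<xi> else 0)"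
      unfolding sum.cartesian_product' by (intro sum.cong refl) (auto simp: c'_def)
    then show ?thesis
      using \<open>finite Q\<close> cell by (cases "x \<in> K") simp_all
  qed
  then have "sep_approx f \<epsilon> (card (Q \<times> I))"
    using assms
    by (intro sep_approx_finite_sum[where c=c' and d="\<lambda>(q, i). d q i"]) (auto simp: case_prod_beta)
  then show ?thesis by (simp add: card_cartesian_product)
qed

definition grid :: "real \<Rightarrow> real^'d::finite \<Rightarrow> real^'d" where
  "grid h x = (\<chi> i. h * of_int \<lfloor>x$i / h\<rfloor>)"

lemma abs_sub_grid_le:
  assumes "h > 0"
  shows "\<bar>(x - grid h x)$i\<bar> \<le> h"
proof -
  have "h * of_int \<lfloor>x$i / h\<rfloor> \<le> x$i"
    using mult_left_mono[OF of_int_floor_le[of "x$i / h"], of h] assms by simp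
  moreover have "x$i < h * of_int \<lfloor>x$i / h\<rfloor> + h"
    using mult_strict_left_mono[OF real_of_int_floor_add_one_gt[of "x$i / h"] assms] assms
    by (simp add: distrib_left)
  ultimately show ?thesis by (simp add: grid_def)
qed

lemma
  fixes K :: "(real^'d::finite) set"
  assumes h: "0 < h" "h \<le> 1" and "0 \<le> R" and K: "\<And>x i. x \<in> K \<Longrightarrow> \<bar>x$i\<bar> \<le> R"
  shows finite_grid_image: "finite (grid h ` K)"
    and card_grid_image_le: "real (card (grid h ` K)) \<le> (2 * R + 3) ^ CARD('d) / h ^ CARD('d)"
proof -
  define N where "N = \<lceil>R / h\<rceil>"
  define P where "P = (\<Pi>\<^sub>E i\<in>(UNIV::'d set). {-N..N})"
  have "grid h x \<in> (\<lambda>k. \<chi> i. h * of_int (k i)) ` P" if "x \<in> K" for x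
  proof -
    have "\<lfloor>x$i / h\<rfloor> \<in> {-N..N}" for i
    proof -
      have "-R / h \<le> x$i / h" "x$i / h \<le> R / h"
        using K[OF that, of i] h by (auto simp: abs_le_iff field_simps)
      then have "\<lfloor>-R / h\<rfloor> \<le> \<lfloor>x$i / h\<rfloor>" "\<lfloor>x$i / h\<rfloor> \<le> \<lfloor>R / h\<rfloor>"
        by (auto intro: floor_mono)
      moreover have "\<lfloor>R / h\<rfloor> \<le> N"
        unfolding N_def by (rule floor_le_ceiling)
      moreover have "\<lfloor>-R / h\<rfloor> = -N"
        unfolding N_def by (simp add: floor_minus)
      ultimately show ?thesis by auto
    qed
    then have "(\<lambda>i. \<lfloor>x$i / h\<rfloor>) \<in> P"
      unfolding P_def by (auto simp: PiE_UNIV_domain)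
    then show ?thesis
      unfolding grid_def by (rule rev_image_eqI) simp
  qed
  then have sub: "grid h ` K \<subseteq> (\<lambda>k. \<chi> i. h * of_int (k i)) ` P"
    by blast
  have finP: "finite P" unfolding P_def by (rule finite_PiE) auto
  show "finite (grid h ` K)" using sub finP finite_subset by blast
  have "card (grid h ` K) \<le> card P"
    using sub finP by (meson card_image_le card_mono finite_imageI le_trans)
  also have "card P = nat (2 * N + 1) ^ CARD('d)"
    unfolding P_def by (simp add: card_PiE)
  finally have "real (card (grid h ` K)) \<le> real (nat (2 * N + 1)) ^ CARD('d)"
    by (metis of_nat_le_iff of_nat_power)
  also have "\<dots> \<le> ((2 * R + 3) / h) ^ CARD('d)"
  proof (rule power_mono)
    have "0 \<le> R / h"
      using \<open>0 \<le> R\<close> h by simp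
    then have "0 \<le> N" "real_of_int N \<le> R / h + 1"
      unfolding N_def by linarith+
    moreover have "2 * (R / h) + 3 \<le> (2 * R + 3) / h"
      using h by (simp add: field_simps)
    ultimately show "real (nat (2 * N + 1)) \<le> (2 * R + 3) / h"
      by simp
  qed simp
  finally show "real (card (grid h ` K)) \<le> (2 * R + 3) ^ CARD('d) / h ^ CARD('d)"
    by (simp add: power_divide)
qed

lemma sep_approx_grid_Taylor:
  fixes a :: "real^'d::finite \<Rightarrow> 'b::real_normed_vector \<Rightarrow> complex"
  assumes smooth: "smooth_fun (\<lambda>(x, \<xi>). a x \<xi>)"
    and deriv_bound: "\<And>is p. cmod (iter_dd (x_axes is) (\<lambda>(x, \<xi>). a x \<xi>) p) \<le> Cf is"
    and support: "\<And>x \<xi>. x \<notin> K \<Longrightarrow> a x \<xi> = 0"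
    and finite_cells: "finite (grid h ` K)" and "h > 0"
  shows "sep_approx a (h ^ Suc n * (\<Sum>is\<in>multi_indices (Suc n). Cf is))
    (card (grid h ` K) * card (SIGMA k:{..n}. (multi_indices k :: 'd list set)))"
proof -
  let ?A = "\<lambda>(x, \<xi>). a x \<xi>"
  let ?I = "SIGMA k:{..n}. (multi_indices k :: 'd list set)"
  define c where
    "c q = (\<lambda>(k :: nat, is :: 'd list) x. of_real (\<Prod>i\<leftarrow>is. (x - q)$i) / fact k :: complex)"
    for q :: "real^'d"
  define d where
    "d q = (\<lambda>(k :: nat, is :: 'd list) \<xi>. iter_dd (x_axes is) ?A (q, \<xi>))"
    for q :: "real^'d"
  have "0 \<le> Cf is" for "is"
    by (rule order_trans[OF norm_ge_zero deriv_bound])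
  then have err_nonneg: "0 \<le> h ^ Suc n * (\<Sum>is\<in>multi_indices (Suc n). Cf is)"
    using \<open>h > 0\<close> by (simp add: sum_nonneg)
  have approx: "cmod (a x \<xi> - (\<Sum>ki\<in>?I. c (grid h x) ki x * d (grid h x) ki \<xi>))
      \<le> h ^ Suc n * (\<Sum>is\<in>multi_indices (Suc n). Cf is)" for x \<xi>
  proof -
    have "(\<Sum>ki\<in>?I. c (grid h x) ki x * d (grid h x) ki \<xi>) = x_Taylor_poly n ?A (grid h x) x \<xi>"
      by (simp add: x_Taylor_poly_def c_def d_def sum.Sigma finite_multi_indices case_prod_unfold)
    then show ?thesis
      using x_Taylor_poly_error[OF smooth deriv_bound abs_sub_grid_le[OF \<open>h > 0\<close>]] by simp
  qed
  have "finite ?I"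
    by (simp add: finite_multi_indices)
  from sep_approx_piecewise[where cell = "grid h" and c = c and d = d,
      OF finite_cells this err_nonneg imageI support approx]
  show ?thesis .
qed

text \<open>Take h = (\<epsilon>/E)^(1/p); for \<epsilon> \<ge> E the zero function already works.\<close>

lemma sep_rank_le_powr:
  assumes "0 < E" "0 \<le> L" "0 < p" "real D \<le> s * real p"
    and bounded: "\<And>x \<xi>. cmod (f x \<xi>) \<le> E"
    and rate: "\<And>h. 0 < h \<Longrightarrow> h < 1 \<Longrightarrow> \<exists>r. sep_approx f (E * h ^ p) r \<and> real r \<le> L / h ^ D"
  shows "\<exists>C>0. \<forall>\<epsilon>>0. real (sep_rank f \<epsilon>) \<le> C * \<epsilon> powr (- s)"
proof (intro exI[of _ "L * E powr s + 1"] conjI allI impI)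
  show "0 < L * E powr s + 1"
    using \<open>0 \<le> L\<close> by (simp add: add_nonneg_pos)
  fix \<epsilon> :: real
  assume "\<epsilon> > 0"
  show "real (sep_rank f \<epsilon>) \<le> (L * E powr s + 1) * \<epsilon> powr (- s)"
  proof (cases "E \<le> \<epsilon>")
    case True
    then have "sep_approx f \<epsilon> 0"
      unfolding sep_approx_def using bounded order_trans by fastforce
    then show ?thesis
      using sep_rank_le[of f \<epsilon> 0] \<open>0 \<le> L\<close> \<open>0 < E\<close> by simp
  next
    case False
    define h where "h = (\<epsilon> / E) powr (1 / p)"
    have "0 < h" "h < 1"
      unfolding h_def using False \<open>\<epsilon> > 0\<close> \<open>0 < p\<close> powr_less_mono2[of "1 / p" "\<epsilon> / E" 1]
      by auto
    have "E * h ^ p = \<epsilon>"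
      unfolding h_def using \<open>\<epsilon> > 0\<close> \<open>0 < E\<close> \<open>0 < p\<close> by (simp flip: powr_realpow add: powr_powr)
    with rate[OF \<open>0 < h\<close> \<open>h < 1\<close>] obtain r where "sep_approx f \<epsilon> r" "real r \<le> L / h ^ D"
      by auto
    then have "real (sep_rank f \<epsilon>) \<le> L * (1 / h) ^ D"
      using sep_rank_le by (fastforce simp: power_one_over)
    also have "(1 / h) ^ D = (E / \<epsilon>) powr (real D / p)"
      unfolding h_def using \<open>\<epsilon> > 0\<close> \<open>0 < E\<close>
      by (simp flip: powr_realpow add: powr_powr powr_divide)
    also have "\<dots> \<le> (E / \<epsilon>) powr s"
      using False \<open>\<epsilon> > 0\<close> \<open>0 < p\<close> \<open>real D \<le> s * real p\<close>
      by (intro powr_mono) (auto simp: field_simps)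
    also have "(E / \<epsilon>) powr s = E powr s * \<epsilon> powr (- s)"
      using \<open>\<epsilon> > 0\<close> \<open>0 < E\<close> by (simp add: powr_divide powr_minus_divide)
    finally have "real (sep_rank f \<epsilon>) \<le> L * (E powr s * \<epsilon> powr (- s))"
      using \<open>0 \<le> L\<close> by (meson mult_left_mono)
    then show ?thesis
      using powr_ge_zero[of \<epsilon> "- s"] by (simp only: distrib_right mult.assoc mult_1)
  qed
qed

lemma symbol_S0_10_x_derivatives_bounded:
  fixes a :: "real^'d::finite \<Rightarrow> real^'d \<Rightarrow> complex"
  assumes "symbol_S0_10 a"
  shows "\<exists>C. \<forall>p. cmod (iter_dd (x_axes bs) (\<lambda>(x, \<xi>). a x \<xi>) p) \<le> C"
proof -
  obtain C where C: "\<And>x \<xi>. cmod (mixed_partial [] bs a x \<xi>)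
      \<le> C * (1 + norm \<xi> ^ 2) powr (- real (length ([] :: 'd list)) / 2)"
    using assms unfolding symbol_S0_10_def by blast
  have "(1 + norm \<xi> ^ 2) powr (- real (length ([] :: 'd list)) / 2) = 1" for \<xi> :: "real^'d"
    using add_pos_nonneg[of 1 "norm \<xi> ^ 2"] by simp
  then have "cmod (iter_dd (x_axes bs) (\<lambda>(x, \<xi>). a x \<xi>) p) \<le> C" for p
    using C[of "fst p" "snd p"] by (simp add: mixed_partial_def case_prod_beta)
  then show ?thesis by blast
qed

lemma sep_rank_le_powr_of_bounded_x_support:
  fixes a :: "real^'d::finite \<Rightarrow> 'b::real_normed_vector \<Rightarrow> complex"
  assumes smooth: "smooth_fun (\<lambda>(x, \<xi>). a x \<xi>)"
    and deriv_bound: "\<And>is p. cmod (iter_dd (x_axes is) (\<lambda>(x, \<xi>). a x \<xi>) p) \<le> Cf is"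
    and "bounded K" and support: "\<And>x \<xi>. x \<notin> K \<Longrightarrow> a x \<xi> = 0"
    and "0 < s"
  shows "\<exists>C>0. \<forall>\<epsilon>>0. real (sep_rank a \<epsilon>) \<le> C * \<epsilon> powr (- s)"
proof -
  obtain R where "0 \<le> R" and K_bound: "\<And>x i. x \<in> K \<Longrightarrow> \<bar>x$i\<bar> \<le> R"
    using \<open>bounded K\<close> component_le_norm_cart
    unfolding bounded_iff by (metis abs_ge_zero order.trans nle_le)
  define n where "n = nat \<lceil>CARD('d) / s\<rceil>"
  define E where "E = max 1 (max (Cf []) (\<Sum>is\<in>multi_indices (Suc n). Cf is))"
  define L where "L = (2 * R + 3) ^ CARD('d) * card (SIGMA k:{..n}. (multi_indices k :: 'd list set))"
  show ?thesis
  proof (rule sep_rank_le_powr[of E L "Suc n" "CARD('d)"])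
    have "real CARD('d) / s \<le> n"
      unfolding n_def by (rule real_nat_ceiling_ge)
    then have "real CARD('d) \<le> s * n"
      using \<open>0 < s\<close> by (simp add: pos_divide_le_eq mult.commute)
    then show "real CARD('d) \<le> s * real (Suc n)"
      using \<open>0 < s\<close> by (simp add: distrib_left)
    show "cmod (a x \<xi>) \<le> E" for x \<xi>
      using deriv_bound[of "[]" "(x, \<xi>)"] by (simp add: E_def)
    fix h :: real
    assume "0 < h" "h < 1"
    then have "h \<le> 1" by simp
    note cells = finite_grid_image[where K = K, OF \<open>0 < h\<close> \<open>h \<le> 1\<close> \<open>0 \<le> R\<close> K_bound]
      card_grid_image_le[where K = K, OF \<open>0 < h\<close> \<open>h \<le> 1\<close> \<open>0 \<le> R\<close> K_bound]
    have "sep_approx a (E * h ^ Suc n)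
        (card (grid h ` K) * card (SIGMA k:{..n}. (multi_indices k :: 'd list set)))"
      using sep_approx_grid_Taylor[OF smooth deriv_bound support cells(1) \<open>0 < h\<close>]
    proof (rule sep_approx_mono)
      have "(\<Sum>is\<in>multi_indices (Suc n). Cf is) \<le> E"
        by (simp add: E_def)
      then show "h ^ Suc n * (\<Sum>is\<in>multi_indices (Suc n). Cf is) \<le> E * h ^ Suc n"
        using \<open>0 < h\<close> by (simp add: mult.commute mult_left_mono)
    qed
    moreover have "real (card (grid h ` K) * card (SIGMA k:{..n}. (multi_indices k :: 'd list set)))
        \<le> L / h ^ CARD('d)"
      using mult_right_mono[OF cells(2) of_nat_0_le_iff] by (simp add: L_def)
    ultimately show "\<exists>r. sep_approx a (E * h ^ Suc n) r \<and> real r \<le> L / h ^ CARD('d)"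
      by blast
  qed (use \<open>0 \<le> R\<close> in \<open>auto simp: E_def L_def\<close>)
qed

theorem lemma2:
  fixes a :: "real^'d::finite \<Rightarrow> real^'d \<Rightarrow> complex"
  assumes "symbol_S0_10 a"
    and "compact_supp_x a"
  shows "\<forall>M>0. \<exists>C>0. \<forall>\<epsilon>>0. real (sep_rank a \<epsilon>) \<le> C * \<epsilon> powr (- 1 / M)"
proof (intro allI impI)
  fix M :: real
  assume "M > 0"
  have smooth: "smooth_fun (\<lambda>(x, \<xi>). a x \<xi>)"
    using assms(1) by (simp add: symbol_S0_10_def)
  obtain Cf where deriv_bound: "\<And>is p. cmod (iter_dd (x_axes is) (\<lambda>(x, \<xi>). a x \<xi>) p) \<le> Cf is"
    using symbol_S0_10_x_derivatives_bounded[OF assms(1)] by metis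
  obtain K where "compact K" and support: "\<And>x \<xi>. x \<notin> K \<Longrightarrow> a x \<xi> = 0"
    using assms(2) unfolding compact_supp_x_def by blast
  have "\<exists>C>0. \<forall>\<epsilon>>0. real (sep_rank a \<epsilon>) \<le> C * \<epsilon> powr (- (1 / M))"
    using \<open>M > 0\<close> compact_imp_bounded[OF \<open>compact K\<close>]
    by (intro sep_rank_le_powr_of_bounded_x_support[OF smooth deriv_bound _ support]) simp_all
  then show "\<exists>C>0. \<forall>\<epsilon>>0. real (sep_rank a \<epsilon>) \<le> C * \<epsilon> powr (- 1 / M)"
    by simp
qed

end
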